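(* Fix $a\in\mathbb{C}\setminus\{0\}$ and let $U\subset\mathbb{C}\setminus\{0\}$ be a domain on which $1-ax\neq 0$ (and on which the functions below are nowhere vanishing). Define \[ f_1(x)=\frac{ax}{1-ax},\qquad f_2(x)=\frac{1}{1-ax},\qquad x\in U. \] Then $\mathcal{A}[f_1]=f_2$ and $\mathcal{A}[f_2]=f_1$ on $U$, and $f_1\not\equiv f_2$; that is, $(f_1,f_2)$ is a nondegenerate period-$2$ orbit of $\mathcal{A}$.
   Context: For a complex-differentiable, nowhere-vanishing function $f$ on a domain $U\subset\mathbb{C}\setminus\{0\}$, the dual logarithmic derivative operator is $\mathcal{A}[f](x)=\dfrac{\mathrm{d}\ln f(x)}{\mathrm{d}\ln x}=\dfrac{x f'(x)}{f(x)}$ (for any fixed analytic branches of the logarithms). A pair $(f_1,f_2)$ of holomorphic nowhere-vanishing functions on $U$ is a period-$2$ orbit of $\mathcal{A}$ if $\mathcal{A}[f_1]=f_2$ and $\mathcal{A}[f_2]=f_1$; it is nondegenerate if $f_1\not\equiv f_2$. *)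

theory Defs
  imports "HOL-Complex_Analysis.Complex_Analysis"
begin

definition dual_log_deriv :: "(complex \<Rightarrow> complex) \<Rightarrow> complex \<Rightarrow> complex" where
  "dual_log_deriv f x = x * deriv f x / f x"

definition is_domain :: "complex set \<Rightarrow> bool" where
  "is_domain U \<longleftrightarrow> open U \<and> connected U \<and> U \<noteq> {}"

definition nondeg_period2_orbit ::
  "complex set \<Rightarrow> (complex \<Rightarrow> complex) \<Rightarrow> (complex \<Rightarrow> complex) \<Rightarrow> bool" where
  "nondeg_period2_orbit U f1 f2 \<longleftrightarrow>
     f1 holomorphic_on U \<and> f2 holomorphic_on U \<and>
     (\<forall>x\<in>U. f1 x \<noteq> 0 \<and> f2 x \<noteq> 0) \<and>
     (\<forall>x\<in>U. dual_log_deriv f1 x = f2 x) \<and>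
     (\<forall>x\<in>U. dual_log_deriv f2 x = f1 x) \<and>
     (\<exists>x\<in>U. f1 x \<noteq> f2 x)"

end

theory Submission
  imports Defs
begin

text \<open>Both functions have derivative \<open>a / (1 - a x)\<^sup>2\<close> (they differ by the constant 1),
  so \<open>x f\<^sub>1' = x f\<^sub>2' = a x / (1 - a x)\<^sup>2 = f\<^sub>1 f\<^sub>2\<close>. Dividing by \<open>f\<^sub>1\<close>, resp. \<open>f\<^sub>2\<close>,
  gives \<open>\<A>[f\<^sub>1] = f\<^sub>2\<close> and \<open>\<A>[f\<^sub>2] = f\<^sub>1\<close>; and \<open>f\<^sub>2 - f\<^sub>1 = 1\<close> shows nondegeneracy.\<close>

lemma dual_log_deriv_eqI:
  assumes "(f has_field_derivative f') (at x)" and "f x \<noteq> 0" and "x * f' = f x * g"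
  shows "dual_log_deriv f x = g"
  using assms by (simp add: dual_log_deriv_def DERIV_imp_deriv)

lemma nondeg_period2_orbitI:
  assumes "\<And>x. x \<in> U \<Longrightarrow> (f1 has_field_derivative f1' x) (at x)"
    and "\<And>x. x \<in> U \<Longrightarrow> (f2 has_field_derivative f2' x) (at x)"
    and "open U"
    and "\<And>x. x \<in> U \<Longrightarrow> f1 x \<noteq> 0 \<and> f2 x \<noteq> 0"
    and "\<And>x. x \<in> U \<Longrightarrow> x * f1' x = f1 x * f2 x \<and> x * f2' x = f1 x * f2 x"
    and "\<exists>x\<in>U. f1 x \<noteq> f2 x"
  shows "nondeg_period2_orbit U f1 f2"
proof -
  have "f1 holomorphic_on U" "f2 holomorphic_on U"
    using assms(1-3) by (auto simp: holomorphic_on_open field_differentiable_def)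
  moreover have "dual_log_deriv f1 x = f2 x" "dual_log_deriv f2 x = f1 x" if "x \<in> U" for x
    using that assms(1,2,4,5)
    by (auto intro!: dual_log_deriv_eqI simp: mult.commute)
  ultimately show ?thesis
    using assms(4,6) unfolding nondeg_period2_orbit_def by blast
qed

lemma has_field_derivative_one_over_one_minus:
  fixes a x :: complex
  assumes "1 - a * x \<noteq> 0"
  shows "((\<lambda>x. 1 / (1 - a * x)) has_field_derivative a / (1 - a * x)\<^sup>2) (at x)"
  using assms by (auto intro!: derivative_eq_intros simp: power2_eq_square)

lemma has_field_derivative_mult_over_one_minus:
  fixes a x :: complex
  assumes "1 - a * x \<noteq> 0"
  shows "((\<lambda>x. a * x / (1 - a * x)) has_field_derivative a / (1 - a * x)\<^sup>2) (at x)"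
  using assms by (auto intro!: derivative_eq_intros simp: power2_eq_square algebra_simps)

lemma one_over_one_minus_minus_mult_over_one_minus:
  fixes a x :: complex
  assumes "1 - a * x \<noteq> 0"
  shows "1 / (1 - a * x) - a * x / (1 - a * x) = 1"
  using assms by (simp add: diff_divide_distrib [symmetric])

theorem proposition3p1:
  fixes a :: complex and U :: "complex set"
  assumes "a \<noteq> 0"
    and "is_domain U" and "0 \<notin> U"
    and "\<forall>x\<in>U. 1 - a * x \<noteq> 0"
    and "\<forall>x\<in>U. a * x / (1 - a * x) \<noteq> 0 \<and> 1 / (1 - a * x) \<noteq> 0"
  shows "(\<forall>x\<in>U. dual_log_deriv (\<lambda>x. a * x / (1 - a * x)) x = 1 / (1 - a * x))
       \<and> (\<forall>x\<in>U. dual_log_deriv (\<lambda>x. 1 / (1 - a * x)) x = a * x / (1 - a * x))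
       \<and> (\<exists>x\<in>U. a * x / (1 - a * x) \<noteq> 1 / (1 - a * x))
       \<and> nondeg_period2_orbit U (\<lambda>x. a * x / (1 - a * x)) (\<lambda>x. 1 / (1 - a * x))"
proof -
  have x_times_deriv: "x * (a / (1 - a * x)\<^sup>2) = a * x / (1 - a * x) * (1 / (1 - a * x))" for x
    by (simp add: power2_eq_square)
  have distinct: "\<exists>x\<in>U. a * x / (1 - a * x) \<noteq> 1 / (1 - a * x)"
    using assms(2,4) one_over_one_minus_minus_mult_over_one_minus
    unfolding is_domain_def by fastforce
  have "nondeg_period2_orbit U (\<lambda>x. a * x / (1 - a * x)) (\<lambda>x. 1 / (1 - a * x))"
    using assms(2,4,5) distinct x_times_deriv
    by (intro nondeg_period2_orbitI[where f1' = "\<lambda>x. a / (1 - a * x)\<^sup>2"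
                                       and f2' = "\<lambda>x. a / (1 - a * x)\<^sup>2"])
       (auto simp: is_domain_def has_field_derivative_mult_over_one_minus
                   has_field_derivative_one_over_one_minus)
  then show ?thesis
    unfolding nondeg_period2_orbit_def by blast
qed

end
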